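(* Let $n,m\ge 1$, let $A=(a_1,\ldots,a_m)$ be a real $n\times m$ matrix with $a_i\neq 0$ for all $i$, and let $b=(b_1,\ldots,b_m)^\top\in\mathbb{R}^m$ be such that $K=\{x\in\mathbb{R}^n \mid A^\top x\le b\}$ is nonempty. For $\varepsilon>0$ put $b_i(\varepsilon)=b_i+\varepsilon^i$ ($\varepsilon$ to the power $i$), $H_i(\varepsilon)=\{x\in\mathbb{R}^n\mid a_i^\top x\le b_i(\varepsilon)\}$, $\partial H_i(\varepsilon)=\{x\in\mathbb{R}^n\mid a_i^\top x= b_i(\varepsilon)\}$, $K(\varepsilon)=\bigcap_{i=1}^m H_i(\varepsilon)$, $F_i(\varepsilon)=\partial H_i(\varepsilon)\cap K(\varepsilon)$, and $\mathcal{F}(\varepsilon)=\{J\subseteq\{1,\ldots,m\}\mid J\neq\emptyset,\ \bigcap_{i\in J}F_i(\varepsilon)\neq\emptyset\}$. Then there exists $\delta>0$ such that for all $\varepsilon\in(0,\delta)$: (i) the family of hyperplanes $\{\partial H_i(\varepsilon)\mid i=1,\ldots,m\}$ is in general position; and (ii) $\mathcal{F}(\varepsilon)$ does not depend on $\varepsilon$; writing $\mathcal{F}(0+)$ for this common value, $\mathcal{F}(0+)$ is a simplicial complex.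
   Context: A finite set of $m$ hyperplanes $\{P_i\subset\mathbb{R}^n\mid i=1,\ldots,m\}$ is said to be in general position if there is no $J\subseteq\{1,\ldots,m\}$ such that $\bigcap_{i\in J}P_i$ contains an affine subspace of dimension $\max\{n+1-|J|,0\}$. A simplicial complex here means an abstract simplicial complex on the vertex set $\{1,\ldots,m\}$: a family of nonempty subsets closed under taking nonempty subsets. *)

theory Defs
  imports "HOL-Analysis.Analysis"
begin

definition general_position :: "nat \<Rightarrow> (nat \<Rightarrow> ('a::euclidean_space) set) \<Rightarrow> bool" where
  "general_position m P \<longleftrightarrow>
     \<not> (\<exists>J S. J \<subseteq> {1..m} \<and> affine S \<and> S \<noteq> {} \<and>
            aff_dim S = max (int DIM('a) + 1 - int (card J)) 0 \<and>
            S \<subseteq> (\<Inter>i\<in>J. P i))"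

definition simplicial_complex :: "nat \<Rightarrow> nat set set \<Rightarrow> bool" where
  "simplicial_complex m \<F> \<longleftrightarrow>
     (\<forall>J\<in>\<F>. J \<noteq> {} \<and> J \<subseteq> {1..m}) \<and>
     (\<forall>J\<in>\<F>. \<forall>I. I \<noteq> {} \<and> I \<subseteq> J \<longrightarrow> I \<in> \<F>)"

definition bpert :: "(nat \<Rightarrow> real) \<Rightarrow> real \<Rightarrow> nat \<Rightarrow> real" where
  "bpert b \<epsilon> i = b i + \<epsilon> ^ i"

definition halfspace_eps :: "(nat \<Rightarrow> 'a::euclidean_space) \<Rightarrow> (nat \<Rightarrow> real) \<Rightarrow> real \<Rightarrow> nat \<Rightarrow> 'a set" where
  "halfspace_eps a b \<epsilon> i = {x. a i \<bullet> x \<le> bpert b \<epsilon> i}"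

definition hyperplane_eps :: "(nat \<Rightarrow> 'a::euclidean_space) \<Rightarrow> (nat \<Rightarrow> real) \<Rightarrow> real \<Rightarrow> nat \<Rightarrow> 'a set" where
  "hyperplane_eps a b \<epsilon> i = {x. a i \<bullet> x = bpert b \<epsilon> i}"

definition K_eps :: "nat \<Rightarrow> (nat \<Rightarrow> 'a::euclidean_space) \<Rightarrow> (nat \<Rightarrow> real) \<Rightarrow> real \<Rightarrow> 'a set" where
  "K_eps m a b \<epsilon> = (\<Inter>i\<in>{1..m}. halfspace_eps a b \<epsilon> i)"

definition F_eps :: "nat \<Rightarrow> (nat \<Rightarrow> 'a::euclidean_space) \<Rightarrow> (nat \<Rightarrow> real) \<Rightarrow> real \<Rightarrow> nat \<Rightarrow> 'a set" where
  "F_eps m a b \<epsilon> i = hyperplane_eps a b \<epsilon> i \<inter> K_eps m a b \<epsilon>"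

definition face_family :: "nat \<Rightarrow> (nat \<Rightarrow> 'a::euclidean_space) \<Rightarrow> (nat \<Rightarrow> real) \<Rightarrow> real \<Rightarrow> nat set set" where
  "face_family m a b \<epsilon> = {J. J \<subseteq> {1..m} \<and> J \<noteq> {} \<and> (\<Inter>i\<in>J. F_eps m a b \<epsilon> i) \<noteq> {}}"

end

theory Submission
  imports Defs "HOL-Computational_Algebra.Polynomial"
begin

text \<open>
  If the hyperplanes a_i \<bullet> x = b_i + \<epsilon>^i (i \<in> J) contain an affine space of dimension
  n + 1 - |J|, the normals a_i satisfy a nontrivial linear relation \<lambda>, and every such relation is
  inherited by the offsets: \<Sum> \<lambda>_i (b_i + \<epsilon>^i) = 0. But this is a nonzero polynomial in \<epsilon>
  (its coefficient of \<epsilon>^i is \<lambda>_i), so it does not vanish for small \<epsilon> > 0; this gives general position.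

  Whether J belongs to the face family is the feasibility of a linear system whose right-hand sides
  are polynomials in \<epsilon>. Fourier-Motzkin elimination turns feasibility into a finite conjunction of
  polynomial sign conditions, each of which is constant for small \<epsilon> > 0. Hence membership of every
  J is eventually constant, and the limit family inherits downward closure from each face family.
\<close>

definition eventually_decided :: "'a filter \<Rightarrow> ('a \<Rightarrow> bool) \<Rightarrow> bool" where
  "eventually_decided F P \<longleftrightarrow> eventually P F \<or> eventually (\<lambda>x. \<not> P x) F"

lemma eventually_decided_ball_finite:
  assumes "finite A" "\<forall>y\<in>A. eventually_decided F (P y)"
  shows "eventually_decided F (\<lambda>x. \<forall>y\<in>A. P y x)"
proof (cases "\<forall>y\<in>A. eventually (P y) F")
  case True
  then have "eventually (\<lambda>x. \<forall>y\<in>A. P y x) F"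
    by (rule eventually_ball_finite[OF assms(1)])
  then show ?thesis unfolding eventually_decided_def ..
next
  case False
  then obtain y where "y \<in> A" "eventually (\<lambda>x. \<not> P y x) F"
    using assms(2) unfolding eventually_decided_def by blast
  then have "eventually (\<lambda>x. \<not> (\<forall>y\<in>A. P y x)) F"
    by (auto elim: eventually_mono)
  then show ?thesis unfolding eventually_decided_def by blast
qed

lemma poly_eventually_pos_or_neg_at_right_0:
  fixes p :: "real poly"
  assumes "p \<noteq> 0"
  shows "eventually (\<lambda>e. 0 < poly p e) (at_right 0) \<or> eventually (\<lambda>e. poly p e < 0) (at_right 0)"
proof -
  obtain q where q: "p = [:0, 1:] ^ order 0 p * q" "\<not> [:0, 1:] dvd q"
    using order_decomp[OF assms, of 0] by auto
  have poly_p: "poly p e = e ^ order 0 p * poly q e" for e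
    by (subst q(1)) (simp add: poly_monom)
  have "poly q 0 \<noteq> 0"
    using q(2) poly_eq_0_iff_dvd[of q 0] by simp
  moreover have lim: "(poly q \<longlongrightarrow> poly q 0) (at_right 0)"
    by (rule tendsto_within_subset[OF poly_isCont[unfolded isCont_def]]) simp
  ultimately have "eventually (\<lambda>e. 0 < poly q e) (at_right 0) \<or>
      eventually (\<lambda>e. poly q e < 0) (at_right 0)"
    using order_tendstoD[OF lim] by (meson linorder_neqE_linordered_idom)
  moreover have pos: "eventually (\<lambda>e. 0 < e ^ order 0 p) (at_right (0::real))"
    using eventually_at_right_less[of "0::real"] by (rule eventually_mono) simp
  ultimately show ?thesis
  proof (elim disjE)
    assume "eventually (\<lambda>e. 0 < poly q e) (at_right 0)"
    with pos have "eventually (\<lambda>e. 0 < poly p e) (at_right 0)"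
      by eventually_elim (simp add: poly_p)
    then show ?thesis ..
  next
    assume "eventually (\<lambda>e. poly q e < 0) (at_right 0)"
    with pos have "eventually (\<lambda>e. poly p e < 0) (at_right 0)"
      by eventually_elim (simp add: poly_p mult_pos_neg)
    then show ?thesis ..
  qed
qed

lemma poly_eventually_nonzero_at_right_0:
  fixes p :: "real poly"
  assumes "p \<noteq> 0"
  shows "eventually (\<lambda>e. poly p e \<noteq> 0) (at_right 0)"
  using poly_eventually_pos_or_neg_at_right_0[OF assms]
proof
  assume "eventually (\<lambda>e. 0 < poly p e) (at_right 0)"
  then show ?thesis by (rule eventually_mono) simp
next
  assume "eventually (\<lambda>e. poly p e < 0) (at_right 0)"
  then show ?thesis by (rule eventually_mono) simp
qed

lemma poly_nonneg_eventually_decided_at_right_0: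
  "eventually_decided (at_right 0) (\<lambda>e. 0 \<le> poly (p :: real poly) e)"
proof (cases "p = 0")
  case False
  then consider "eventually (\<lambda>e. 0 < poly p e) (at_right 0)"
    | "eventually (\<lambda>e. poly p e < 0) (at_right 0)"
    using poly_eventually_pos_or_neg_at_right_0 by blast
  then show ?thesis
  proof cases
    case 1
    then show ?thesis
      unfolding eventually_decided_def by (auto elim: eventually_mono)
  next
    case 2
    then have "eventually (\<lambda>e. \<not> 0 \<le> poly p e) (at_right 0)"
      by (rule eventually_mono) simp
    then show ?thesis unfolding eventually_decided_def ..
  qed
qed (simp add: eventually_decided_def)

lemma exists_real_between_finite:
  fixes L U :: "real set"
  assumes "finite L" "finite U" "\<forall>l\<in>L. \<forall>u\<in>U. l \<le> u"
  shows "\<exists>s. (\<forall>l\<in>L. l \<le> s) \<and> (\<forall>u\<in>U. s \<le> u)"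
proof (cases "L = {}")
  case True
  then show ?thesis
    by (cases "U = {}") (auto intro: exI[of _ "Min U"] simp: assms(2))
next
  case False
  then show ?thesis using assms by (intro exI[of _ "Max L"]) auto
qed

lemma exists_real_solution_of_one_variable_system:
  fixes \<alpha> r :: "'c \<Rightarrow> real"
  assumes "finite C"
    and "\<forall>c\<in>C. \<alpha> c = 0 \<longrightarrow> 0 \<le> r c"
    and "\<forall>c\<in>C. \<forall>d\<in>C. 0 < \<alpha> c \<longrightarrow> \<alpha> d < 0 \<longrightarrow> 0 \<le> - \<alpha> d * r c + \<alpha> c * r d"
  shows "\<exists>s. \<forall>c\<in>C. s * \<alpha> c \<le> r c"
proof -
  define L where "L = (\<lambda>d. r d / \<alpha> d) ` {d\<in>C. \<alpha> d < 0}"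
  define U where "U = (\<lambda>c. r c / \<alpha> c) ` {c\<in>C. 0 < \<alpha> c}"
  have "\<forall>l\<in>L. \<forall>u\<in>U. l \<le> u"
  proof (clarsimp simp: L_def U_def)
    fix c d assume "d \<in> C" "\<alpha> d < 0" "c \<in> C" "0 < \<alpha> c"
    with assms(3) show "r d / \<alpha> d \<le> r c / \<alpha> c"
      by (force simp: divide_le_eq le_divide_eq field_simps)
  qed
  then obtain s where s: "\<forall>l\<in>L. l \<le> s" "\<forall>u\<in>U. s \<le> u"
    using exists_real_between_finite[of L U] assms(1) by (auto simp: L_def U_def)
  have "s * \<alpha> c \<le> r c" if "c \<in> C" for c
  proof (cases "\<alpha> c" "0::real" rule: linorder_cases)
    case less
    then show ?thesis using s(1) that by (auto simp: L_def divide_le_eq)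
  next
    case equal
    then show ?thesis using assms(2) that by simp
  next
    case greater
    then show ?thesis using s(2) that by (auto simp: U_def le_divide_eq)
  qed
  then show ?thesis by blast
qed

definition satisfiable :: "('a::real_inner \<times> real poly) set \<Rightarrow> real \<Rightarrow> bool" where
  "satisfiable C e \<longleftrightarrow> (\<exists>x. \<forall>(v, p)\<in>C. v \<bullet> x \<le> poly p e)"

definition fourier_motzkin :: "'a::real_inner \<Rightarrow> ('a \<times> real poly) set \<Rightarrow> ('a \<times> real poly) set" where
  "fourier_motzkin u C = {(v, p) \<in> C. v \<bullet> u = 0} \<union>
     {((- (w \<bullet> u)) *\<^sub>R v + (v \<bullet> u) *\<^sub>R w, smult (- (w \<bullet> u)) p + smult (v \<bullet> u) q) | v p w q.
        (v, p) \<in> C \<and> 0 < v \<bullet> u \<and> (w, q) \<in> C \<and> w \<bullet> u < 0}"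

lemma finite_fourier_motzkin: "finite C \<Longrightarrow> finite (fourier_motzkin u C)"
proof -
  assume "finite C"
  then have "finite ((\<lambda>((v, p), (w, q)). ((- (w \<bullet> u)) *\<^sub>R v + (v \<bullet> u) *\<^sub>R w,
      smult (- (w \<bullet> u)) p + smult (v \<bullet> u) q)) ` (C \<times> C))"
    by simp
  moreover have "fourier_motzkin u C \<subseteq> C \<union> (\<lambda>((v, p), (w, q)). ((- (w \<bullet> u)) *\<^sub>R v + (v \<bullet> u) *\<^sub>R w,
      smult (- (w \<bullet> u)) p + smult (v \<bullet> u) q)) ` (C \<times> C)"
    unfolding fourier_motzkin_def by force
  ultimately show ?thesis
    using \<open>finite C\<close> by (meson finite_UnI finite_subset)
qed

lemma satisfiable_fourier_motzkin:
  assumes "satisfiable C e"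
  shows "satisfiable (fourier_motzkin u C) e"
proof -
  obtain x where x: "\<forall>(v, p)\<in>C. v \<bullet> x \<le> poly p e"
    using assms unfolding satisfiable_def by blast
  have "v' \<bullet> x \<le> poly p' e" if "(v', p') \<in> fourier_motzkin u C" for v' p'
    using that unfolding fourier_motzkin_def
  proof safe
    fix v p w q assume "(v, p) \<in> C" "0 < v \<bullet> u" "(w, q) \<in> C" "w \<bullet> u < 0"
    then have "- (w \<bullet> u) * (v \<bullet> x) + (v \<bullet> u) * (w \<bullet> x) \<le> - (w \<bullet> u) * poly p e + (v \<bullet> u) * poly q e"
      using x by (intro add_mono mult_left_mono) auto
    then show "((- (w \<bullet> u)) *\<^sub>R v + (v \<bullet> u) *\<^sub>R w) \<bullet> x \<le> poly (smult (- (w \<bullet> u)) p + smult (v \<bullet> u) q) e"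
      by (simp only: inner_add_left inner_scaleR_left poly_add poly_smult)
  qed (use x in auto)
  then show ?thesis unfolding satisfiable_def by blast
qed

lemma satisfiable_if_fourier_motzkin:
  assumes "finite C" "satisfiable (fourier_motzkin u C) e"
  shows "satisfiable C e"
proof -
  obtain y where y: "\<forall>(v, p)\<in>fourier_motzkin u C. v \<bullet> y \<le> poly p e"
    using assms(2) unfolding satisfiable_def by blast
  define slack where "slack = (\<lambda>(v, p). poly p e - v \<bullet> y)"
  have "\<exists>s. \<forall>c\<in>C. s * (fst c \<bullet> u) \<le> slack c"
  proof (rule exists_real_solution_of_one_variable_system[OF assms(1)], safe)
    fix v p assume "(v, p) \<in> C" "fst (v, p) \<bullet> u = 0"
    then show "0 \<le> slack (v, p)"
      using y unfolding slack_def fourier_motzkin_def by auto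
  next
    fix v p w q assume "(v, p) \<in> C" "0 < fst (v, p) \<bullet> u" "(w, q) \<in> C" "fst (w, q) \<bullet> u < 0"
    then have "((- (w \<bullet> u)) *\<^sub>R v + (v \<bullet> u) *\<^sub>R w) \<bullet> y \<le> poly (smult (- (w \<bullet> u)) p + smult (v \<bullet> u) q) e"
      using y unfolding fourier_motzkin_def by fastforce
    then show "0 \<le> - (fst (w, q) \<bullet> u) * slack (v, p) + fst (v, p) \<bullet> u * slack (w, q)"
      by (simp add: slack_def inner_add_left algebra_simps)
  qed
  then obtain s where s: "\<forall>c\<in>C. s * (fst c \<bullet> u) \<le> slack c" ..
  have "\<forall>(v, p)\<in>C. v \<bullet> (y + s *\<^sub>R u) \<le> poly p e"
    using s by (auto simp: slack_def inner_add_right mult.commute)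
  then show ?thesis unfolding satisfiable_def by blast
qed

lemma fourier_motzkin_orthogonal:
  assumes "(v, p) \<in> fourier_motzkin u C"
  shows "v \<bullet> u = 0"
  using assms unfolding fourier_motzkin_def by (auto simp: inner_diff_left)

lemma fourier_motzkin_preserves_orthogonal:
  assumes "(v, p) \<in> fourier_motzkin u C" "\<forall>c\<in>C. fst c \<bullet> j = 0"
  shows "v \<bullet> j = 0"
proof -
  from assms(1) consider "(v, p) \<in> C"
    | v' p' w q where "(v', p') \<in> C" "(w, q) \<in> C" "v = (- (w \<bullet> u)) *\<^sub>R v' + (v' \<bullet> u) *\<^sub>R w"
    unfolding fourier_motzkin_def by blast
  then show ?thesis
  proof cases
    case 1
    with assms(2) show ?thesis by force
  next
    case 2
    with assms(2) have "v' \<bullet> j = 0" "w \<bullet> j = 0" by force+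
    with 2(3) show ?thesis by (simp only: inner_add_left inner_scaleR_left)
  qed
qed

lemma satisfiable_eventually_decided_if_supported:
  fixes C :: "('a::euclidean_space \<times> real poly) set"
  assumes "finite I" "I \<subseteq> Basis" "finite C" "\<forall>c\<in>C. \<forall>j\<in>Basis - I. fst c \<bullet> j = 0"
  shows "eventually_decided (at_right 0) (satisfiable C)"
  using assms
proof (induction I arbitrary: C rule: finite_subset_induct)
  case empty
  then have "\<forall>c\<in>C. fst c = 0"
    by (simp add: euclidean_all_zero_iff)
  then have "satisfiable C e \<longleftrightarrow> (\<forall>c\<in>C. 0 \<le> poly (snd c) e)" for e
    unfolding satisfiable_def by (auto simp: case_prod_beta)
  then have "satisfiable C = (\<lambda>e. \<forall>c\<in>C. 0 \<le> poly (snd c) e)" ..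
  moreover have "eventually_decided (at_right 0) (\<lambda>e. \<forall>c\<in>C. 0 \<le> poly (snd c) e)"
    by (rule eventually_decided_ball_finite[OF empty.prems(1)])
      (simp add: poly_nonneg_eventually_decided_at_right_0)
  ultimately show ?case by simp
next
  case (insert k I)
  have "\<forall>c\<in>fourier_motzkin k C. \<forall>j\<in>Basis - I. fst c \<bullet> j = 0"
  proof (clarify)
    fix v p j assume vp: "(v, p) \<in> fourier_motzkin k C" and j: "j \<in> Basis" "j \<notin> I"
    show "fst (v, p) \<bullet> j = 0"
    proof (cases "j = k")
      case True
      with vp show ?thesis by (simp add: fourier_motzkin_orthogonal)
    next
      case False
      with j insert.prems(2) have "\<forall>c\<in>C. fst c \<bullet> j = 0" by blast
      with vp show ?thesis by (simp add: fourier_motzkin_preserves_orthogonal)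
    qed
  qed
  then have "eventually_decided (at_right 0) (satisfiable (fourier_motzkin k C))"
    using insert.IH finite_fourier_motzkin[OF insert.prems(1)] by blast
  moreover have "satisfiable (fourier_motzkin k C) = satisfiable C"
    using satisfiable_fourier_motzkin satisfiable_if_fourier_motzkin[OF insert.prems(1)] by blast
  ultimately show ?case by simp
qed

lemma satisfiable_eventually_decided:
  fixes C :: "('a::euclidean_space \<times> real poly) set"
  assumes "finite C"
  shows "eventually_decided (at_right 0) (satisfiable C)"
  using satisfiable_eventually_decided_if_supported[of Basis C] assms by simp

lemma aff_dim_add_dim_normals_le:
  fixes a :: "nat \<Rightarrow> 'a::euclidean_space"
  assumes "affine S" "S \<noteq> {}" "S \<subseteq> (\<Inter>i\<in>J. {x. a i \<bullet> x = c i})"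
  shows "aff_dim S + int (dim (a ` J)) \<le> int DIM('a)"
proof -
  obtain x0 where x0: "x0 \<in> S" using assms(2) by blast
  define V where "V = (\<lambda>x. x - x0) ` S"
  have "subspace V"
    using affine_diffs_subspace[OF assms(1) x0] by (simp add: V_def)
  have aff_dim_S: "aff_dim S = int (dim V)"
    unfolding V_def using aff_dim_eq_dim[of x0 S] x0 by (simp add: hull_inc)
  define W where "W = {y. \<forall>x\<in>V. orthogonal x y}"
  have "dim W + dim V = DIM('a)"
    using dim_subspace_orthogonal_to_vectors[OF \<open>subspace V\<close> subspace_UNIV]
    by (simp add: W_def dim_UNIV)
  moreover have "a ` J \<subseteq> W"
  proof (clarsimp simp: W_def V_def orthogonal_def)
    fix i x assume "i \<in> J" "x \<in> S"
    then have "a i \<bullet> x = c i" "a i \<bullet> x0 = c i" using assms(3) x0 by auto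
    then show "(x - x0) \<bullet> a i = 0" by (simp add: inner_diff_right inner_commute)
  qed
  then have "dim (a ` J) \<le> dim W" by (rule dim_subset)
  ultimately show ?thesis using aff_dim_S by linarith
qed

definition linearly_dependent_on :: "(nat \<Rightarrow> 'a::real_vector) \<Rightarrow> nat set \<Rightarrow> bool" where
  "linearly_dependent_on a J \<longleftrightarrow> (\<exists>l. (\<exists>i\<in>J. l i \<noteq> 0) \<and> (\<Sum>i\<in>J. l i *\<^sub>R a i) = 0)"

lemma linearly_dependent_on_if_dim_less_card:
  fixes a :: "nat \<Rightarrow> 'a::euclidean_space"
  assumes "finite J" "dim (a ` J) < card J"
  shows "linearly_dependent_on a J"
proof (cases "inj_on a J")
  case True
  then have "dependent (a ` J)"
    using assms(2) dim_eq_card_independent[of "a ` J"] by (auto simp: card_image)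
  then obtain u where u: "\<exists>v\<in>a ` J. u v \<noteq> 0" "(\<Sum>v\<in>a ` J. u v *\<^sub>R v) = 0"
    using dependent_finite[OF finite_imageI[OF assms(1)]] by blast
  have "(\<Sum>i\<in>J. u (a i) *\<^sub>R a i) = 0"
    using u(2) sum.reindex[OF True, of "\<lambda>v. u v *\<^sub>R v"] by simp
  with u(1) show ?thesis
    unfolding linearly_dependent_on_def by (intro exI[of _ "u \<circ> a"]) auto
next
  case False
  then obtain i j where ij: "i \<in> J" "j \<in> J" "i \<noteq> j" "a i = a j"
    unfolding inj_on_def by blast
  define l where "l t = (if t = i then 1 else if t = j then -1 else 0 :: real)" for t
  have "(\<Sum>t\<in>J. l t *\<^sub>R a t) = (\<Sum>t\<in>{i, j}. l t *\<^sub>R a t)"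
    using ij(1,2) assms(1) by (intro sum.mono_neutral_right) (auto simp: l_def)
  also have "\<dots> = 0" using ij(3,4) by (simp add: l_def)
  finally show ?thesis
    using ij(1) unfolding linearly_dependent_on_def by (intro exI[of _ l]) (auto simp: l_def)
qed

lemma not_general_position_hyperplanes:
  fixes a :: "nat \<Rightarrow> 'a::euclidean_space"
  assumes "\<not> general_position m (\<lambda>i. {x. a i \<bullet> x = c i})"
  obtains J where "J \<subseteq> {1..m}" "linearly_dependent_on a J"
    "\<forall>l. (\<Sum>i\<in>J. l i *\<^sub>R a i) = 0 \<longrightarrow> (\<Sum>i\<in>J. l i * c i) = 0"
proof -
  obtain J S where J: "J \<subseteq> {1..m}" and S: "affine S" "S \<noteq> {}"
    "aff_dim S = max (int DIM('a) + 1 - int (card J)) 0"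
    "S \<subseteq> (\<Inter>i\<in>J. {x. a i \<bullet> x = c i})"
    using assms unfolding general_position_def by blast
  have "finite J" using J finite_subset by blast
  have "dim (a ` J) < card J"
    using aff_dim_add_dim_normals_le[OF S(1,2,4)] S(3) by linarith
  then have "linearly_dependent_on a J"
    by (rule linearly_dependent_on_if_dim_less_card[OF \<open>finite J\<close>])
  moreover obtain x0 where x0: "x0 \<in> S" using S(2) by blast
  have "(\<Sum>i\<in>J. l i * c i) = 0" if "(\<Sum>i\<in>J. l i *\<^sub>R a i) = 0" for l
  proof -
    have "(\<Sum>i\<in>J. l i * c i) = (\<Sum>i\<in>J. l i * (a i \<bullet> x0))"
      using S(4) x0 by (intro sum.cong) auto
    also have "\<dots> = (\<Sum>i\<in>J. l i *\<^sub>R a i) \<bullet> x0"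
      by (simp add: inner_sum_left)
    finally show ?thesis using that by simp
  qed
  ultimately show thesis using that J by blast
qed

definition perturbation_poly :: "(nat \<Rightarrow> real) \<Rightarrow> nat \<Rightarrow> real poly" where
  "perturbation_poly b i = [:b i:] + monom 1 i"

lemma poly_perturbation_poly [simp]: "poly (perturbation_poly b i) e = bpert b e i"
  by (simp add: perturbation_poly_def bpert_def poly_monom)

lemma coeff_perturbation_poly:
  "k \<noteq> 0 \<Longrightarrow> coeff (perturbation_poly b i) k = (if i = k then 1 else 0)"
  by (cases k) (auto simp: perturbation_poly_def coeff_monom)

lemma perturbed_relation_eventually_nonzero:
  assumes "finite J" "0 \<notin> J" "i0 \<in> J" "l i0 \<noteq> 0"
  shows "eventually (\<lambda>e. (\<Sum>i\<in>J. l i * bpert b e i) \<noteq> 0) (at_right 0)"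
proof -
  define p where "p = (\<Sum>i\<in>J. smult (l i) (perturbation_poly b i))"
  have "i0 \<noteq> 0" using assms(2,3) by metis
  have "coeff p i0 = (\<Sum>i\<in>J. if i = i0 then l i else 0)"
    unfolding p_def coeff_sum using \<open>i0 \<noteq> 0\<close>
    by (intro sum.cong) (auto simp: coeff_perturbation_poly[of i0])
  also have "\<dots> = l i0" using assms(1,3) by simp
  finally have "p \<noteq> 0" using assms(4) by auto
  then have "eventually (\<lambda>e. poly p e \<noteq> 0) (at_right 0)"
    by (rule poly_eventually_nonzero_at_right_0)
  then show ?thesis by (simp add: p_def poly_sum)
qed

lemma eventually_general_position:
  fixes a :: "nat \<Rightarrow> 'a::euclidean_space"
  shows "eventually (\<lambda>e. general_position m (hyperplane_eps a b e)) (at_right 0)"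
proof -
  \<comment> \<open>One relation per J suffices, since all relations among the normals pass to the offsets.\<close>
  have "\<forall>J\<in>Pow {1..m}. eventually (\<lambda>e. linearly_dependent_on a J \<longrightarrow>
      (\<exists>l. (\<Sum>i\<in>J. l i *\<^sub>R a i) = 0 \<and> (\<Sum>i\<in>J. l i * bpert b e i) \<noteq> 0)) (at_right 0)"
  proof
    fix J assume J: "J \<in> Pow {1..m}"
    show "eventually (\<lambda>e. linearly_dependent_on a J \<longrightarrow>
        (\<exists>l. (\<Sum>i\<in>J. l i *\<^sub>R a i) = 0 \<and> (\<Sum>i\<in>J. l i * bpert b e i) \<noteq> 0)) (at_right 0)"
    proof (cases "linearly_dependent_on a J")
      case True
      then obtain l i0 where l: "i0 \<in> J" "l i0 \<noteq> 0" "(\<Sum>i\<in>J. l i *\<^sub>R a i) = 0"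
        unfolding linearly_dependent_on_def by blast
      have "finite J" "0 \<notin> J" using J finite_subset by auto
      from perturbed_relation_eventually_nonzero[of J i0 l b, OF this l(1,2)]
      show ?thesis by (rule eventually_mono) (use l(3) in blast)
    qed simp
  qed
  then have "eventually (\<lambda>e. \<forall>J\<in>Pow {1..m}. linearly_dependent_on a J \<longrightarrow>
      (\<exists>l. (\<Sum>i\<in>J. l i *\<^sub>R a i) = 0 \<and> (\<Sum>i\<in>J. l i * bpert b e i) \<noteq> 0)) (at_right 0)"
    by (rule eventually_ball_finite[rotated]) simp
  then show ?thesis
  proof (rule eventually_mono)
    fix e
    assume "\<forall>J\<in>Pow {1..m}. linearly_dependent_on a J \<longrightarrow>
      (\<exists>l. (\<Sum>i\<in>J. l i *\<^sub>R a i) = 0 \<and> (\<Sum>i\<in>J. l i * bpert b e i) \<noteq> 0)"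
    moreover have "hyperplane_eps a b e = (\<lambda>i. {x. a i \<bullet> x = bpert b e i})"
      by (simp add: hyperplane_eps_def fun_eq_iff)
    ultimately show "general_position m (hyperplane_eps a b e)"
      using not_general_position_hyperplanes[of m a "bpert b e"] by (metis PowI)
  qed
qed

lemma eventually_eq_eventual_members:
  assumes "F \<noteq> bot" "finite X" "\<And>x. G x \<subseteq> X" "\<forall>J\<in>X. eventually_decided F (\<lambda>x. J \<in> G x)"
  shows "eventually (\<lambda>x. G x = {J. eventually (\<lambda>x. J \<in> G x) F}) F"
proof -
  have not_eventually: "\<not> eventually (\<lambda>x. J \<in> G x) F" if "eventually (\<lambda>x. J \<notin> G x) F" for J
    using eventually_frequently[OF assms(1) that] unfolding frequently_def by simp
  have "\<forall>J\<in>X. eventually (\<lambda>x. J \<in> G x \<longleftrightarrow> eventually (\<lambda>x. J \<in> G x) F) F"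
  proof
    fix J assume "J \<in> X"
    then consider "eventually (\<lambda>x. J \<in> G x) F" | "eventually (\<lambda>x. J \<notin> G x) F"
      using assms(4) unfolding eventually_decided_def by blast
    then show "eventually (\<lambda>x. J \<in> G x \<longleftrightarrow> eventually (\<lambda>x. J \<in> G x) F) F"
    proof cases
      case 1
      then show ?thesis by (rule eventually_mono) (use 1 in simp)
    next
      case 2
      then show ?thesis by (rule eventually_mono) (use not_eventually[OF 2] in simp)
    qed
  qed
  then have "eventually (\<lambda>x. \<forall>J\<in>X. J \<in> G x \<longleftrightarrow> eventually (\<lambda>x. J \<in> G x) F) F"
    by (rule eventually_ball_finite[OF assms(2)])
  then show ?thesis
  proof (rule eventually_mono)
    fix x assume members: "\<forall>J\<in>X. J \<in> G x \<longleftrightarrow> eventually (\<lambda>x. J \<in> G x) F"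
    show "G x = {J. eventually (\<lambda>x. J \<in> G x) F}"
    proof (intro set_eqI iffI)
      fix J assume "J \<in> G x"
      then show "J \<in> {J. eventually (\<lambda>x. J \<in> G x) F}" using members assms(3) by blast
    next
      fix J assume J: "J \<in> {J. eventually (\<lambda>x. J \<in> G x) F}"
      have "J \<in> X"
      proof (rule ccontr)
        assume "J \<notin> X"
        then have "eventually (\<lambda>x. J \<notin> G x) F" using assms(3) by (intro always_eventually) blast
        with J not_eventually show False by blast
      qed
      with J members show "J \<in> G x" by blast
    qed
  qed
qed

definition face_system :: "nat \<Rightarrow> (nat \<Rightarrow> 'a::euclidean_space) \<Rightarrow> (nat \<Rightarrow> real) \<Rightarrow> nat set \<Rightarrow>
    ('a \<times> real poly) set" where
  "face_system m a b J =
     (\<lambda>i. (a i, perturbation_poly b i)) ` {1..m} \<union> (\<lambda>i. (- a i, - perturbation_poly b i)) ` J"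

lemma face_system_constraints_iff:
  "(\<forall>(v, p)\<in>face_system m a b J. v \<bullet> x \<le> poly p e) \<longleftrightarrow>
     (\<forall>i\<in>{1..m}. a i \<bullet> x \<le> bpert b e i) \<and> (\<forall>i\<in>J. bpert b e i \<le> a i \<bullet> x)"
  by (simp add: face_system_def ball_Un)

lemma mem_Inter_F_eps_iff:
  assumes "J \<noteq> {}"
  shows "x \<in> (\<Inter>i\<in>J. F_eps m a b e i) \<longleftrightarrow>
     (\<forall>i\<in>{1..m}. a i \<bullet> x \<le> bpert b e i) \<and> (\<forall>i\<in>J. a i \<bullet> x = bpert b e i)"
  using assms by (auto simp: F_eps_def hyperplane_eps_def K_eps_def halfspace_eps_def)

lemma face_family_iff_satisfiable:
  assumes "J \<subseteq> {1..m}" "J \<noteq> {}"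
  shows "J \<in> face_family m a b e \<longleftrightarrow> satisfiable (face_system m a b J) e"
proof -
  have facet: "(\<forall>i\<in>J. a i \<bullet> x = bpert b e i) \<longleftrightarrow> (\<forall>i\<in>J. bpert b e i \<le> a i \<bullet> x)"
    if "\<forall>i\<in>{1..m}. a i \<bullet> x \<le> bpert b e i" for x
    using that assms(1) by (metis order.antisym order.refl subsetD)
  have "x \<in> (\<Inter>i\<in>J. F_eps m a b e i) \<longleftrightarrow> (\<forall>(v, p)\<in>face_system m a b J. v \<bullet> x \<le> poly p e)" for x
    unfolding face_system_constraints_iff mem_Inter_F_eps_iff[OF assms(2)] using facet by blast
  moreover have "J \<in> face_family m a b e \<longleftrightarrow> (\<exists>x. x \<in> (\<Inter>i\<in>J. F_eps m a b e i))"
    using assms unfolding face_family_def by blast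
  ultimately show ?thesis
    unfolding satisfiable_def by simp
qed

lemma face_family_eventually_decided:
  "eventually_decided (at_right 0) (\<lambda>e. J \<in> face_family m a b e)"
proof (cases "J \<subseteq> {1..m} \<and> J \<noteq> {}")
  case True
  have "finite (face_system m a b J)"
    using finite_subset[of J "{1..m}"] True unfolding face_system_def by simp
  moreover have "(\<lambda>e. J \<in> face_family m a b e) = satisfiable (face_system m a b J)"
    using True by (simp add: fun_eq_iff face_family_iff_satisfiable)
  ultimately show ?thesis
    using satisfiable_eventually_decided by simp
next
  case False
  then show ?thesis by (simp add: eventually_decided_def face_family_def)
qed

lemma face_family_downward_closed:
  assumes "J \<in> face_family m a b e" "I \<subseteq> J" "I \<noteq> {}"
  shows "I \<in> face_family m a b e"
  using assms unfolding face_family_def by blast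

lemma eventually_face_family_eq:
  "eventually (\<lambda>e. face_family m a b e = {J. eventually (\<lambda>e. J \<in> face_family m a b e) (at_right 0)})
    (at_right 0)"
proof (rule eventually_eq_eventual_members)
  show "face_family m a b e \<subseteq> Pow {1..m}" for e
    unfolding face_family_def by blast
qed (simp_all add: face_family_eventually_decided)

lemma simplicial_complex_eventual_faces:
  "simplicial_complex m {J. eventually (\<lambda>e. J \<in> face_family m a b e) (at_right (0::real))}"
proof -
  have "J \<noteq> {} \<and> J \<subseteq> {1..m}" if ev: "eventually (\<lambda>e. J \<in> face_family m a b e) (at_right (0::real))" for J
  proof -
    obtain e where "J \<in> face_family m a b e"
      using eventually_happens'[OF trivial_limit_at_right_real ev] by blast
    then show ?thesis unfolding face_family_def by blast
  qed
  moreover have "eventually (\<lambda>e. I \<in> face_family m a b e) (at_right (0::real))"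
    if "eventually (\<lambda>e. J \<in> face_family m a b e) (at_right (0::real))" "I \<noteq> {}" "I \<subseteq> J" for I J
    using that(1) by (rule eventually_mono) (use that(2,3) face_family_downward_closed in blast)
  ultimately show ?thesis
    unfolding simplicial_complex_def by blast
qed

theorem lemma1:
  fixes m :: nat and a :: "nat \<Rightarrow> real ^ 'n" and b :: "nat \<Rightarrow> real"
  assumes "m \<ge> 1"
    and "\<forall>i\<in>{1..m}. a i \<noteq> 0"
    and "{x :: real ^ 'n. \<forall>i\<in>{1..m}. a i \<bullet> x \<le> b i} \<noteq> {}"
  shows "\<exists>\<delta>>0.
           (\<forall>\<epsilon>. 0 < \<epsilon> \<and> \<epsilon> < \<delta> \<longrightarrow> general_position m (hyperplane_eps a b \<epsilon>)) \<and>
           (\<exists>\<F>0. (\<forall>\<epsilon>. 0 < \<epsilon> \<and> \<epsilon> < \<delta> \<longrightarrow> face_family m a b \<epsilon> = \<F>0) \<and>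
                  simplicial_complex m \<F>0)"
proof -
  define \<F>0 where "\<F>0 = {J. eventually (\<lambda>e. J \<in> face_family m a b e) (at_right (0::real))}"
  have "eventually (\<lambda>e. general_position m (hyperplane_eps a b e) \<and> face_family m a b e = \<F>0)
      (at_right 0)"
    unfolding \<F>0_def by (intro eventually_conj eventually_general_position eventually_face_family_eq)
  then obtain \<delta> where "\<delta> > 0"
    "\<forall>e>0. e < \<delta> \<longrightarrow> general_position m (hyperplane_eps a b e) \<and> face_family m a b e = \<F>0"
    unfolding eventually_at_right_field by auto
  moreover have "simplicial_complex m \<F>0"
    unfolding \<F>0_def by (rule simplicial_complex_eventual_faces)
  ultimately show ?thesis by (intro exI[of _ \<delta>] conjI exI[of _ \<F>0]) simp_all
qed

end
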